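(* Let $\Lambda\subset\mathbb{C}$ be a lattice which is not CM and is isogenous to $\overline{\Lambda}$, and let $\gamma\in\mathbb{C}$ with $\mathrm{Isog}(\Lambda,\overline{\Lambda})=\mathbb{Z}\cdot\gamma$. Let $\mathcal{V}\subset\mathbb{R}^2$ be a weakly bialgebraic set for $\mathcal{P}_\Lambda$ which is not a singleton, let $P\in\mathbb{R}[X,Y]$ be irreducible in $\mathbb{C}[X,Y]$ with real zero locus $\mathcal{V}$, and let $C_P\subset\mathbb{C}^2$ be the complex curve $P=0$. Suppose $f(C_P)=W+\sigma$, where $f(v,w)=(v+iw,v-iw)$, $\sigma\in\mathbb{C}^2$, and $W=\{(x,y)\in\mathbb{C}^2: y=rx\}$ for some $r\in\mathbb{C}$ is a one-dimensional complex subspace generated as an $\mathbb{R}$-vector space by two elements $w_1,w_2\in\Lambda\times\overline{\Lambda}$. Then $\gamma r^{-1}\in\mathbb{Q}$.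
   Context: Identify $\mathbb{R}^2$ with $\mathbb{C}$ via $(x,y)\mapsto x+iy$. For a lattice $\Lambda\subset\mathbb{C}$ let $\wp_\Lambda$ be its Weierstrass $\wp$-function and $\mathcal{P}_\Lambda:\mathbb{R}^2\smallsetminus\Lambda\to\mathbb{R}^2$, $(x,y)\mapsto(\mathrm{Re}\,\wp_\Lambda(x+iy),\mathrm{Im}\,\wp_\Lambda(x+iy))$. A non-empty subset $\mathcal{V}\subsetneq\mathbb{R}^2$ is weakly bialgebraic for $\mathcal{P}_\Lambda$ if (i) there exist algebraic subvarieties $V\subset\mathbb{A}^2_\mathbb{R}$ and $W'\subsetneq\mathbb{A}^2_\mathbb{R}$ with $\mathcal{V}=V(\mathbb{R})$ and $\mathcal{P}_\Lambda(\mathcal{V}\cap(\mathbb{R}^2\smallsetminus\Lambda))\subset W'(\mathbb{R})$; and (ii) $\mathcal{V}$ cannot be written as $V_1(\mathbb{R})\cup V_2(\mathbb{R})$ with $V_i$ algebraic subvarieties and both inclusions $V_i(\mathbb{R})\subset\mathcal{V}$ proper. For lattices $\Lambda_1,\Lambda_2$, $\mathrm{Isog}(\Lambda_1,\Lambda_2)=\{\alpha\in\mathbb{C}:\alpha\Lambda_1\subset\Lambda_2\}$; isogenous means this is non-zero; $\Lambda$ is CM if $\mathrm{Isog}(\Lambda,\Lambda)$ has rank two. $\overline{\Lambda}$ denotes the complex conjugate lattice. *)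

theory Defs
  imports "HOL-Analysis.Analysis" "HOL-Computational_Algebra.Polynomial"
begin

definition is_lattice :: "complex set \<Rightarrow> bool" where
  "is_lattice L \<longleftrightarrow> (\<exists>\<omega>1 \<omega>2. \<omega>1 \<noteq> 0 \<and> Im (\<omega>2 / \<omega>1) \<noteq> 0 \<and>
      L = {of_int m * \<omega>1 + of_int n * \<omega>2 | m n. True})"

definition Isog :: "complex set \<Rightarrow> complex set \<Rightarrow> complex set" where
  "Isog L1 L2 = {\<alpha>. (\<lambda>z. \<alpha> * z) ` L1 \<subseteq> L2}"

definition isogenous :: "complex set \<Rightarrow> complex set \<Rightarrow> bool" where
  "isogenous L1 L2 \<longleftrightarrow> Isog L1 L2 \<noteq> {0}"

definition zrank_two :: "complex set \<Rightarrow> bool" where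
  "zrank_two S \<longleftrightarrow>
     (\<exists>a\<in>S. \<exists>b\<in>S. \<forall>m n :: int. of_int m * a + of_int n * b = 0 \<longrightarrow> m = 0 \<and> n = 0) \<and>
     (\<forall>a\<in>S. \<forall>b\<in>S. \<forall>c\<in>S. \<exists>m n k :: int. (m, n, k) \<noteq> (0, 0, 0) \<and>
          of_int m * a + of_int n * b + of_int k * c = 0)"

definition is_CM :: "complex set \<Rightarrow> bool" where
  "is_CM L \<longleftrightarrow> zrank_two (Isog L L)"

definition wp :: "complex set \<Rightarrow> complex \<Rightarrow> complex" where
  "wp L z = 1 / z\<^sup>2 + (\<Sum>\<^sub>\<infinity>\<omega>\<in>L - {0}. 1 / (z - \<omega>)\<^sup>2 - 1 / \<omega>\<^sup>2)"

definition Pmap :: "complex set \<Rightarrow> real \<times> real \<Rightarrow> real \<times> real" where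
  "Pmap L p = (Re (wp L (Complex (fst p) (snd p))), Im (wp L (Complex (fst p) (snd p))))"

section \<open>Bivariate polynomials (as 'a poly poly: outer variable Y, inner X)\<close>

definition eval2 :: "'a::comm_ring_1 poly poly \<Rightarrow> 'a \<Rightarrow> 'a \<Rightarrow> 'a" where
  "eval2 p x y = poly (poly p [:y:]) x"

definition cpoly2 :: "real poly poly \<Rightarrow> complex poly poly" where
  "cpoly2 p = map_poly (map_poly complex_of_real) p"

definition zero_set2 :: "real poly poly set \<Rightarrow> (real \<times> real) set" where
  "zero_set2 S = {(x, y). \<forall>p\<in>S. eval2 p x y = 0}"

definition real_alg_set :: "(real \<times> real) set \<Rightarrow> bool" where
  "real_alg_set A \<longleftrightarrow> (\<exists>S. finite S \<and> A = zero_set2 S)"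

definition proper_subvariety_points :: "(real \<times> real) set \<Rightarrow> bool" where
  "proper_subvariety_points A \<longleftrightarrow> (\<exists>S. finite S \<and> (\<exists>p\<in>S. p \<noteq> 0) \<and> A = zero_set2 S)"

definition lattice_points_R2 :: "complex set \<Rightarrow> (real \<times> real) set" where
  "lattice_points_R2 L = {p. Complex (fst p) (snd p) \<in> L}"

definition weakly_bialgebraic :: "complex set \<Rightarrow> (real \<times> real) set \<Rightarrow> bool" where
  "weakly_bialgebraic L V \<longleftrightarrow>
     V \<noteq> {} \<and> V \<noteq> UNIV \<and>
     real_alg_set V \<and>
     (\<exists>W'. proper_subvariety_points W' \<and> Pmap L ` (V - lattice_points_R2 L) \<subseteq> W') \<and>
     \<not> (\<exists>V1 V2. real_alg_set V1 \<and> real_alg_set V2 \<and> V1 \<subset> V \<and> V2 \<subset> V \<and> V = V1 \<union> V2)"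

end

theory Submission
  imports Defs
begin

text \<open>Write \<open>W\<close> as the graph of \<open>x \<mapsto> r x\<close> and \<open>w\<^sub>i = (a\<^sub>i, r a\<^sub>i)\<close>. Since \<open>W\<close> is the
  real span of \<open>w\<^sub>1, w\<^sub>2\<close>, the first coordinates \<open>a\<^sub>1, a\<^sub>2 \<in> \<Lambda>\<close> span \<open>\<complex>\<close> over \<open>\<real>\<close>,
  so \<open>\<int>a\<^sub>1 + \<int>a\<^sub>2\<close> has finite index \<open>D\<close> in \<open>\<Lambda>\<close>. As \<open>r a\<^sub>1, r a\<^sub>2\<close> lie in
  \<open>cnj ` \<Lambda>\<close>, the multiple \<open>D r\<close> maps \<open>\<Lambda>\<close> into \<open>cnj ` \<Lambda>\<close>, i.e. \<open>D r = k \<gamma>\<close> with \<open>k \<noteq> 0\<close>,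
  and \<open>\<gamma>/r = D/k\<close>.\<close>

lemma lattice_int_comb:
  assumes "is_lattice L" and "x \<in> L" and "y \<in> L"
  shows "of_int p * x + of_int q * y \<in> L"
proof -
  obtain \<omega>1 \<omega>2 where L: "L = {of_int m * \<omega>1 + of_int n * \<omega>2 | m n. True}"
    using assms(1) unfolding is_lattice_def by blast
  obtain m1 n1 where x: "x = of_int m1 * \<omega>1 + of_int n1 * \<omega>2" using assms(2) L by blast
  obtain m2 n2 where y: "y = of_int m2 * \<omega>1 + of_int n2 * \<omega>2" using assms(3) L by blast
  have "of_int p * x + of_int q * y = of_int (p*m1 + q*m2) * \<omega>1 + of_int (p*n1 + q*n2) * \<omega>2"
    by (simp add: x y algebra_simps)
  then show ?thesis using L by blast
qed

lemma is_lattice_cnj: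
  assumes "is_lattice L"
  shows "is_lattice (cnj ` L)"
proof -
  obtain \<omega>1 \<omega>2 where \<omega>: "\<omega>1 \<noteq> 0" "Im (\<omega>2 / \<omega>1) \<noteq> 0"
    and L: "L = {of_int m * \<omega>1 + of_int n * \<omega>2 | m n. True}"
    using assms unfolding is_lattice_def by blast
  have "cnj ` L = {of_int m * cnj \<omega>1 + of_int n * cnj \<omega>2 | m n. True}"
    unfolding L by (force simp: image_iff)
  moreover have "cnj \<omega>1 \<noteq> 0" "Im (cnj \<omega>2 / cnj \<omega>1) \<noteq> 0"
    using \<omega> by (simp_all flip: complex_cnj_divide)
  ultimately show ?thesis unfolding is_lattice_def by blast
qed

text \<open>\<open>Im (cnj a\<^sub>1 * a\<^sub>2)\<close> is the oriented area of the parallelogram spanned by \<open>a\<^sub>1, a\<^sub>2\<close>.\<close>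

lemma Im_cnj_mult_int_comb:
  "Im (cnj (of_int m1 * u + of_int n1 * v) * (of_int m2 * u + of_int n2 * v))
     = of_int (m1 * n2 - m2 * n1) * Im (cnj u * v)"
  by (simp add: algebra_simps)

lemma Im_cnj_mult_ne_0_if_spans:
  assumes "1 = of_real a * a1 + of_real b * a2" and "\<i> = of_real c * a1 + of_real d * a2"
  shows "Im (cnj a1 * a2) \<noteq> 0"
proof -
  have "Im (cnj 1 * \<i>) = (a * d - b * c) * Im (cnj a1 * a2)"
    unfolding assms by (simp add: algebra_simps)
  then show ?thesis by auto
qed

lemma lattice_finite_index_sublattice:
  assumes "is_lattice L" and "a1 \<in> L" and "a2 \<in> L" and "Im (cnj a1 * a2) \<noteq> 0"
  obtains D :: int where "D \<noteq> 0"
    and "\<And>z. z \<in> L \<Longrightarrow> \<exists>p q. of_int D * z = of_int p * a1 + of_int q * a2"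
proof -
  obtain \<omega>1 \<omega>2 where L: "L = {of_int m * \<omega>1 + of_int n * \<omega>2 | m n. True}"
    using assms(1) unfolding is_lattice_def by blast
  obtain m1 n1 where a1: "a1 = of_int m1 * \<omega>1 + of_int n1 * \<omega>2" using assms(2) L by blast
  obtain m2 n2 where a2: "a2 = of_int m2 * \<omega>1 + of_int n2 * \<omega>2" using assms(3) L by blast
  define D where "D = m1 * n2 - m2 * n1"
  have "Im (cnj a1 * a2) = of_int D * Im (cnj \<omega>1 * \<omega>2)"
    unfolding a1 a2 D_def by (rule Im_cnj_mult_int_comb)
  with assms(4) have "D \<noteq> 0" by auto
  moreover have "\<exists>p q. of_int D * z = of_int p * a1 + of_int q * a2" if "z \<in> L" for z
  proof -
    obtain p q where z: "z = of_int p * \<omega>1 + of_int q * \<omega>2" using \<open>z \<in> L\<close> L by blast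
    \<comment> \<open>Cramer's rule for the integer matrix with rows \<open>(m\<^sub>i, n\<^sub>i)\<close>\<close>
    have "of_int D * z = of_int (p * n2 - q * m2) * a1 + of_int (q * m1 - p * n1) * a2"
      unfolding z a1 a2 D_def by (simp add: algebra_simps)
    then show ?thesis by blast
  qed
  ultimately show ?thesis using that by blast
qed

lemma int_multiple_in_Isog:
  assumes "is_lattice L" and "is_lattice L'"
    and "a1 \<in> L" and "a2 \<in> L" and "Im (cnj a1 * a2) \<noteq> 0"
    and "r * a1 \<in> L'" and "r * a2 \<in> L'"
  obtains D :: int where "D \<noteq> 0" and "of_int D * r \<in> Isog L L'"
proof -
  obtain D :: int where "D \<noteq> 0"
    and D: "\<And>z. z \<in> L \<Longrightarrow> \<exists>p q. of_int D * z = of_int p * a1 + of_int q * a2"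
    using lattice_finite_index_sublattice[OF assms(1,3,4,5)] by blast
  have "of_int D * r * z \<in> L'" if "z \<in> L" for z
  proof -
    obtain p q where Dz: "of_int D * z = of_int p * a1 + of_int q * a2" using D \<open>z \<in> L\<close> by blast
    have "of_int D * r * z = r * (of_int D * z)" by simp
    also have "\<dots> = of_int p * (r * a1) + of_int q * (r * a2)"
      unfolding Dz by (simp add: algebra_simps)
    also have "\<dots> \<in> L'" by (rule lattice_int_comb[OF assms(2,6,7)])
    finally show ?thesis .
  qed
  then have "of_int D * r \<in> Isog L L'" unfolding Isog_def by blast
  with \<open>D \<noteq> 0\<close> show ?thesis using that by blast
qed

lemma graph_spanned_by:
  fixes w1 w2 :: "complex \<times> complex"
  assumes "{(x, r * x) | x. True} = {a *\<^sub>R w1 + b *\<^sub>R w2 | a b. True}"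
  shows "snd w1 = r * fst w1" and "snd w2 = r * fst w2" and "Im (cnj (fst w1) * fst w2) \<noteq> 0"
proof -
  have "w1 = 1 *\<^sub>R w1 + 0 *\<^sub>R w2" and "w2 = 0 *\<^sub>R w1 + 1 *\<^sub>R w2" by simp_all
  then have "w1 \<in> {(x, r * x) | x. True}" and "w2 \<in> {(x, r * x) | x. True}"
    unfolding assms by blast+
  then show "snd w1 = r * fst w1" and "snd w2 = r * fst w2" by auto
  have "(1, r) \<in> {(x, r * x) | x. True}" and "(\<i>, r * \<i>) \<in> {(x, r * x) | x. True}" by auto
  then obtain a b c d where "(1, r) = a *\<^sub>R w1 + b *\<^sub>R w2" and "(\<i>, r * \<i>) = c *\<^sub>R w1 + d *\<^sub>R w2"
    using assms by blast
  then have "1 = of_real a * fst w1 + of_real b * fst w2"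
    and "\<i> = of_real c * fst w1 + of_real d * fst w2"
    by (metis fst_add fst_scaleR fst_conv scaleR_conv_of_real)+
  then show "Im (cnj (fst w1) * fst w2) \<noteq> 0" by (rule Im_cnj_mult_ne_0_if_spans)
qed

theorem lemma2p6p1:
  fixes L :: "complex set" and \<gamma> r :: complex and V :: "(real \<times> real) set"
    and P :: "real poly poly" and \<sigma> w1 w2 :: "complex \<times> complex"
  assumes "is_lattice L"
    and "\<not> is_CM L"
    and "isogenous L (cnj ` L)"
    and "Isog L (cnj ` L) = {of_int n * \<gamma> | n. True}"
    and "weakly_bialgebraic L V"
    and "\<not> (\<exists>a. V = {a})"
    and "irreducible (cpoly2 P)"
    and "zero_set2 {P} = V"
    and "w1 \<in> L \<times> (cnj ` L)" and "w2 \<in> L \<times> (cnj ` L)"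
    and "{(x, r * x) | x. True} = {a *\<^sub>R w1 + b *\<^sub>R w2 | a b. True}"
    and "(\<lambda>(v, w). (v + \<i> * w, v - \<i> * w)) ` {(v, w). eval2 (cpoly2 P) v w = 0}
           = (\<lambda>z. z + \<sigma>) ` {(x, r * x) | x. True}"
  shows "\<gamma> * inverse r \<in> \<rat>"
proof (cases "r = 0")
  case False
  note w = graph_spanned_by[OF assms(11)]
  have "fst w1 \<in> L" "fst w2 \<in> L" "r * fst w1 \<in> cnj ` L" "r * fst w2 \<in> cnj ` L"
    using assms(9,10) w(1,2) by (auto simp: mem_Times_iff)
  then obtain D :: int where "D \<noteq> 0" and "of_int D * r \<in> Isog L (cnj ` L)"
    using int_multiple_in_Isog[OF assms(1) is_lattice_cnj[OF assms(1)] _ _ w(3)] by blast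
  then obtain k :: int where k: "of_int D * r = of_int k * \<gamma>" using assms(4) by blast
  with \<open>D \<noteq> 0\<close> \<open>r \<noteq> 0\<close> have "k \<noteq> 0" by auto
  with k \<open>r \<noteq> 0\<close> have "\<gamma> * inverse r = of_int D / of_int k" by (simp add: field_simps)
  then show ?thesis by simp
qed simp

end
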